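(* Let $N\ge 2$ be an integer and $\kappa,m>0$. For every fixed $k_1\in\mathbb{Z}\cap(0,N)$, $$\sum_{\substack{k_2,k_3,k_4\in\mathbb{Z}\cap(0,N)\\ k_1-k_2-k_3-k_4\equiv 0\ (\mathrm{mod}\ N)}}\big|A^{(1)}_{1,2,3,4}\big|^2\le C\,N^2,$$ with $C>0$ depending only on $\kappa,m$.
   Context: For an integer $N\ge 2$ and constants $\kappa,m>0$, define for $k\in\mathbb{Z}$ the frequency $\omega_k=2\sqrt{\kappa/m}\,\big|\sin(\pi k/N)\big|$ and the $2N$-periodic sign function $\iota(x)=\operatorname{sgn}\sin(\pi x/N)$. For integers $k_1,k_2,k_3,k_4$ set $$T_{1,2,3,4}=-\frac{3}{4\kappa^2}\,\iota(k_2+k_3+k_4)\,\iota(k_2)\,\iota(k_3)\,\iota(k_4)\prod_{i=1}^4\sqrt{\omega_{k_i}},\qquad A^{(1)}_{1,2,3,4}=-\frac{T_{1,2,3,4}}{\omega_{k_1}-\omega_{k_2}-\omega_{k_3}-\omega_{k_4}}.$$ On the summation range (all $k_i\in\mathbb{Z}\cap(0,N)$, $k_1\equiv k_2+k_3+k_4$ mod $N$) the denominator does not vanish. *)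

theory Defs
  imports Complex_Main "HOL-Number_Theory.Cong"
begin

definition omega :: "real \<Rightarrow> real \<Rightarrow> nat \<Rightarrow> int \<Rightarrow> real" where
  "omega \<kappa> m N k = 2 * sqrt (\<kappa> / m) * \<bar>sin (pi * of_int k / real N)\<bar>"

definition iota :: "nat \<Rightarrow> int \<Rightarrow> real" where
  "iota N x = sgn (sin (pi * of_int x / real N))"

definition T4 :: "real \<Rightarrow> real \<Rightarrow> nat \<Rightarrow> int \<Rightarrow> int \<Rightarrow> int \<Rightarrow> int \<Rightarrow> real" where
  "T4 \<kappa> m N k1 k2 k3 k4 =
     - 3 / (4 * \<kappa>^2) * iota N (k2 + k3 + k4) * iota N k2 * iota N k3 * iota N k4
     * (sqrt (omega \<kappa> m N k1) * sqrt (omega \<kappa> m N k2) * sqrt (omega \<kappa> m N k3)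
        * sqrt (omega \<kappa> m N k4))"

definition A1 :: "real \<Rightarrow> real \<Rightarrow> nat \<Rightarrow> int \<Rightarrow> int \<Rightarrow> int \<Rightarrow> int \<Rightarrow> real" where
  "A1 \<kappa> m N k1 k2 k3 k4 =
     - T4 \<kappa> m N k1 k2 k3 k4
     / (omega \<kappa> m N k1 - omega \<kappa> m N k2 - omega \<kappa> m N k3 - omega \<kappa> m N k4)"

end

theory Submission
  imports Defs
begin

(* With x_k = pi k / N every omega_k equals 2 sqrt (kappa / m) sin x_k, so |A^(1)|^2 is at most a
   constant times the resonance ratio sin x1 sin x2 sin x3 sin x4 / (sin x1 - sin x2 - sin x3 - sin x4)^2,
   and the congruence says x2 + x3 + x4 = x1 + j pi with j in {0, 1, 2}.
   For j = 1 the ratio is at most 1, and there are at most N^2 pairs (k2, k3).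
   For j = 0 the identity
     sin (a + b + c) - sin a - sin b - sin c = - 4 sin ((a + b) / 2) sin ((b + c) / 2) sin ((a + c) / 2)
   together with t / 3 <= sin t <= t bounds the ratio by 3^9 / x1^2 = O(N^2 / k1^2); as then k2, k3 < k1,
   at most k1^2 pairs contribute.  The case j = 2 is the same after x -> pi - x, with N - k1 for k1. *)

lemma sin_add3_diff:
  fixes a b c :: real
  shows "sin (a + b + c) - sin a - sin b - sin c
           = - 4 * sin ((a + b) / 2) * sin ((b + c) / 2) * sin ((a + c) / 2)"
proof -
  have "sin (2 * (p + q + r)) - sin (2 * p) - sin (2 * q) - sin (2 * r)
          = - 4 * sin (p + q) * sin (q + r) * sin (p + r)" for p q r :: real
    unfolding sin_double cos_double sin_add cos_add distrib_left
    using sin_cos_squared_add[of p] sin_cos_squared_add[of q] sin_cos_squared_add[of r]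
    by algebra
  from this[of "a / 2" "b / 2" "c / 2"] show ?thesis
    by (simp add: add_divide_distrib)
qed

lemma sin_ge_third:
  fixes t :: real
  assumes "0 \<le> t" "t \<le> 2"
  shows "t / 3 \<le> sin t"
proof -
  have "\<bar>sin t - (\<Sum>m<3. sin_coeff m * t ^ m)\<bar> \<le> inverse (fact 3) * \<bar>t\<bar> ^ 3"
    by (rule Maclaurin_sin_bound)
  moreover have "(\<Sum>m<3. sin_coeff m * t ^ m) = t"
    by (simp add: numeral_3_eq_3 sin_coeff_def)
  ultimately have "\<bar>sin t - t\<bar> \<le> t ^ 3 / 6"
    using assms by (simp add: fact_numeral)
  moreover have "t ^ 3 \<le> 4 * t"
    using assms mult_mono[of t 2 t 2] mult_right_mono[of "t * t" 4 t] by (simp add: power3_eq_cube)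
  ultimately show ?thesis
    unfolding abs_le_iff by linarith
qed

lemma sin_le_twice_sin_half:
  fixes t :: real
  assumes "0 \<le> t" "t \<le> pi"
  shows "sin t \<le> 2 * sin (t / 2)"
proof -
  have "sin t = 2 * sin (t / 2) * cos (t / 2)"
    using sin_double[of "t / 2"] by simp
  also have "\<dots> \<le> 2 * sin (t / 2) * 1"
    using assms by (intro mult_left_mono) (auto intro: sin_ge_zero)
  finally show ?thesis by simp
qed

lemma sin_midpoint_ge:
  fixes x y :: real
  assumes "0 \<le> x" "x \<le> pi" "0 \<le> y" "y \<le> pi"
  shows "(sin x + sin y) / 2 \<le> sin ((x + y) / 2)"
proof -
  have "(sin x + sin y) / 2 = sin ((x + y) / 2) * cos ((x - y) / 2)"
    by (simp add: sin_plus_sin)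
  also have "\<dots> \<le> sin ((x + y) / 2) * 1"
    using assms by (intro mult_left_mono sin_ge_zero) auto
  finally show ?thesis by simp
qed

lemma sin_add_le:
  fixes x y :: real
  assumes "0 \<le> sin x" "0 \<le> sin y"
  shows "sin (x + y) \<le> sin x + sin y"
proof -
  have "sin (x + y) = sin x * cos y + cos x * sin y"
    by (rule sin_add)
  also have "\<dots> \<le> sin x * 1 + 1 * sin y"
    using assms by (intro add_mono mult_left_mono mult_right_mono) auto
  finally show ?thesis by simp
qed

lemma cube_sum_mult3_le:
  fixes a b c :: real
  assumes "0 \<le> a" "0 \<le> b" "0 \<le> c"
  shows "64 * (a + b + c) ^ 3 * (a * b * c) \<le> 27 * ((a + b) * (b + c) * (c + a)) ^ 2"
proof -
  define x where "x = a + b + c"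
  define q where "q = a * b + b * c + c * a"
  define P where "P = (a + b) * (b + c) * (c + a)"
  have "x * q - 9 * (a * b * c) = a * (b - c) ^ 2 + b * (c - a) ^ 2 + c * (a - b) ^ 2"
    unfolding x_def q_def by (simp add: power2_eq_square algebra_simps)
  moreover have "0 \<le> a * (b - c) ^ 2 + b * (c - a) ^ 2 + c * (a - b) ^ 2"
    using assms by simp
  moreover have "P = x * q - a * b * c"
    unfolding P_def x_def q_def by (simp add: algebra_simps)
  ultimately have "8 * (x * q) \<le> 9 * P"
    by linarith
  moreover have "0 \<le> x * q"
    unfolding x_def q_def using assms by simp
  ultimately have xq: "64 * (x * q) ^ 2 \<le> 81 * P ^ 2"
    using power_mono[of "8 * (x * q)" "9 * P" 2] by (simp add: power_mult_distrib)
  have "2 * (q ^ 2 - 3 * (x * (a * b * c)))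
          = (a * b - b * c) ^ 2 + (b * c - c * a) ^ 2 + (c * a - a * b) ^ 2"
    unfolding x_def q_def by (simp add: power2_eq_square algebra_simps)
  then have "3 * (x * (a * b * c)) \<le> q ^ 2"
    by (smt (verit) zero_le_power2)
  then have "64 * x ^ 3 * (a * b * c) \<le> 64 * x ^ 2 * q ^ 2 / 3"
    using mult_left_mono[of "3 * (x * (a * b * c))" "q ^ 2" "64 * x ^ 2"]
    by (simp add: power3_eq_cube power2_eq_square algebra_simps)
  also have "\<dots> \<le> 27 * P ^ 2"
    using xq by (simp add: power_mult_distrib)
  finally show ?thesis unfolding x_def P_def .
qed

lemma sin_prod_le_half_angles:
  fixes u v w y :: real
  assumes "0 \<le> w" "w \<le> u" "w \<le> v" "u \<le> pi" "v \<le> pi" "y \<le> pi" and sum: "u + v = w + y"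
  shows "sin y * sin (u - w) * sin (v - w) \<le> 8 * (sin ((u + v) / 2) * sin ((u - w) / 2) * sin ((v - w) / 2))"
proof -
  have "0 \<le> sin w"
    using assms by (intro sin_ge_zero) auto
  then have "sin y \<le> 2 * sin ((u + v) / 2)"
    using sin_midpoint_ge[of w y] assms sum by simp
  moreover have "sin (u - w) \<le> 2 * sin ((u - w) / 2)" "sin (v - w) \<le> 2 * sin ((v - w) / 2)"
    using assms by (auto intro: sin_le_twice_sin_half)
  moreover have "0 \<le> sin y" "0 \<le> sin (u - w)" "0 \<le> sin (v - w)"
    "0 \<le> sin ((u + v) / 2)" "0 \<le> sin ((u - w) / 2)"
    using assms by (auto intro: sin_ge_zero)
  ultimately have "sin y * sin (u - w) * sin (v - w)
      \<le> (2 * sin ((u + v) / 2)) * (2 * sin ((u - w) / 2)) * (2 * sin ((v - w) / 2))"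
    by (intro mult_mono) auto
  then show ?thesis by simp
qed

lemma sin_prod_le_defect_sq:
  fixes u v w y :: real
  assumes "0 \<le> w" "w \<le> u" "w \<le> v" "u \<le> pi" "v \<le> pi" "y \<le> pi" and sum: "u + v = w + y"
  shows "sin y * sin u * sin v * sin w \<le> (sin u + sin v + sin w - sin y) ^ 2"
proof -
  define S where "S = sin w"
  define A where "A = sin (u - w)"
  define B where "B = sin (v - w)"
  define G where "G = sin ((u + v) / 2) * sin ((u - w) / 2) * sin ((v - w) / 2)"
  (* The defect is 2 S + 4 G with G >= 0, while sin u <= S + A and sin v <= S + B bound the
     product by 3 S^2 + 8 S G. *)
  have "sin y - sin u - sin v + sin w = - 4 * G"
    using sin_add3_diff[of u v "- w"] sum unfolding G_def by (simp add: mult_ac add_diff_eq)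
  then have defect: "sin u + sin v + sin w - sin y = 2 * S + 4 * G"
    unfolding S_def by simp
  have "0 \<le> y" using assms by linarith
  then have y: "0 \<le> sin y" "sin y \<le> 1"
    using assms by (auto intro: sin_ge_zero)
  have S: "0 \<le> S" "S \<le> 1" and A: "0 \<le> A" "A \<le> 1" and B: "0 \<le> B" "B \<le> 1"
    unfolding S_def A_def B_def using assms by (auto intro: sin_ge_zero)
  have G: "0 \<le> G"
    unfolding G_def using assms by (auto intro!: mult_nonneg_nonneg sin_ge_zero)
  have u: "0 \<le> sin u" "sin u \<le> S + A"
    using assms sin_add_le[of w "u - w"] S A unfolding S_def A_def by (auto intro: sin_ge_zero)
  have v: "0 \<le> sin v" "sin v \<le> S + B"
    using assms sin_add_le[of w "v - w"] S B unfolding S_def B_def by (auto intro: sin_ge_zero)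
  have "sin y * A * B \<le> 8 * G"
    unfolding A_def B_def G_def using assms by (rule sin_prod_le_half_angles)
  moreover have "sin y * S * (S + A + B) \<le> 1 * S * 3"
    using y S A B by (intro mult_mono) auto
  ultimately have "sin y * (S + A) * (S + B) \<le> 3 * S + 8 * G"
    by (simp add: algebra_simps)
  then have "sin y * sin u * sin v * S \<le> (3 * S + 8 * G) * S"
    using y u v S mult_mono[of "sin y * sin u" "sin y * (S + A)" "sin v" "S + B"]
    by (intro mult_right_mono) (auto intro: mult_left_mono order_trans)
  also have "\<dots> \<le> (2 * S + 4 * G) ^ 2"
    using S G by (simp add: power2_eq_square algebra_simps)
  finally show ?thesis unfolding defect S_def .
qed

definition resonance_ratio :: "real \<Rightarrow> real \<Rightarrow> real \<Rightarrow> real \<Rightarrow> real" where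
  "resonance_ratio w1 w2 w3 w4 = w1 * w2 * w3 * w4 / (w1 - w2 - w3 - w4) ^ 2"

lemma resonance_ratio_scale:
  "resonance_ratio (c * w1) (c * w2) (c * w3) (c * w4) = c ^ 2 * resonance_ratio w1 w2 w3 w4"
proof -
  have "c * w1 - c * w2 - c * w3 - c * w4 = c * (w1 - w2 - w3 - w4)"
    by (simp add: algebra_simps)
  then show ?thesis
    unfolding resonance_ratio_def power_mult_distrib
    by (cases "c = 0") (simp_all add: power2_eq_square mult_ac)
qed

lemma resonance_ratio_sin_sum_le:
  fixes a b c d :: real
  assumes "0 < a" "0 < b" "0 < c" "d = a + b + c" "d < pi"
  shows "resonance_ratio (sin d) (sin a) (sin b) (sin c) \<le> 3 ^ 9 / d ^ 2"
proof -
  define P where "P = (a + b) * (b + c) * (c + a)"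
  have P: "0 < P" unfolding P_def using assms by simp
  have "0 < d" using assms by simp
  have "(a + b) / 6 * ((b + c) / 6) * ((c + a) / 6)
          \<le> sin ((a + b) / 2) * sin ((b + c) / 2) * sin ((a + c) / 2)"
    using assms pi_less_4 sin_ge_third[of "(a + b) / 2"] sin_ge_third[of "(b + c) / 2"]
      sin_ge_third[of "(a + c) / 2"]
    by (intro mult_mono) (auto simp: add.commute)
  then have "(P / 216) ^ 2 \<le> (sin ((a + b) / 2) * sin ((b + c) / 2) * sin ((a + c) / 2)) ^ 2"
    using P unfolding P_def by (intro power_mono) (auto simp: field_simps)
  then have den: "16 * (P / 216) ^ 2 \<le> (sin d - sin a - sin b - sin c) ^ 2"
    unfolding \<open>d = a + b + c\<close> sin_add3_diff by (simp add: power_mult_distrib)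
  have num: "sin d * sin a * sin b * sin c \<le> d * a * b * c"
    using assms by (intro mult_mono sin_x_le_x mult_nonneg_nonneg sin_ge_zero) auto
  have "resonance_ratio (sin d) (sin a) (sin b) (sin c) \<le> d * a * b * c / (16 * (P / 216) ^ 2)"
    unfolding resonance_ratio_def using num den P assms
    by (intro frac_le mult_nonneg_nonneg sin_ge_zero) auto
  also have "\<dots> = 2916 * (d ^ 3 * (a * b * c)) / P ^ 2 / d ^ 2"
    using P \<open>0 < d\<close> by (simp add: field_simps power2_eq_square power3_eq_cube)
  also have "\<dots> \<le> 3 ^ 9 / d ^ 2"
  proof (intro divide_right_mono)
    have "64 * (d ^ 3 * (a * b * c)) \<le> 27 * P ^ 2"
      using cube_sum_mult3_le[of a b c] assms unfolding P_def by simp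
    moreover have "0 \<le> d ^ 3 * (a * b * c)" "0 \<le> P ^ 2"
      using assms by simp_all
    ultimately have "2916 * (d ^ 3 * (a * b * c)) \<le> 19683 * P ^ 2"
      by linarith
    then show "2916 * (d ^ 3 * (a * b * c)) / P ^ 2 \<le> 3 ^ 9"
      using P by (simp add: divide_le_eq)
  qed simp
  finally show ?thesis .
qed

lemma resonance_ratio_sin_sum_2pi_le:
  fixes a b c d :: real
  assumes "a < pi" "b < pi" "c < pi" "d + 2 * pi = a + b + c" "0 < d"
  shows "resonance_ratio (sin d) (sin a) (sin b) (sin c) \<le> 3 ^ 9 / (pi - d) ^ 2"
  using resonance_ratio_sin_sum_le[of "pi - a" "pi - b" "pi - c" "pi - d"] assms by simp

lemma resonance_ratio_sin_sum_pi_le_one: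
  fixes a b c d :: real
  assumes "0 \<le> a" "a \<le> pi" "0 \<le> b" "b \<le> pi" "0 \<le> c" "c \<le> pi" "0 \<le> d" "d \<le> pi"
    and sum: "d + pi = a + b + c"
  shows "resonance_ratio (sin d) (sin a) (sin b) (sin c) \<le> 1"
proof -
  (* Two of the sums a + b, b + c, a + c lie on the same side of pi; if these are a + c and b + c,
     passing to supplements where needed yields angles u + v = w + y with w the smallest. *)
  have pair: "sin d * sin a * sin b * sin c \<le> (sin a + sin b + sin c - sin d) ^ 2"
    if "0 \<le> a" "a \<le> pi" "0 \<le> b" "b \<le> pi" "0 \<le> c" "c \<le> pi" "0 \<le> d" "d \<le> pi"
      "d + pi = a + b + c" and "pi \<le> a + c \<and> pi \<le> b + c \<or> a + c \<le> pi \<and> b + c \<le> pi"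
    for a b c d :: real
    using that(10)
  proof
    assume "pi \<le> a + c \<and> pi \<le> b + c"
    then show ?thesis
      using sin_prod_le_defect_sq[of "pi - c" a b d] that by simp
  next
    assume "a + c \<le> pi \<and> b + c \<le> pi"
    then show ?thesis
      using sin_prod_le_defect_sq[of c "pi - a" "pi - b" "pi - d"] that by (simp add: mult_ac)
  qed
  have "pi \<le> a + c \<and> pi \<le> b + c \<or> a + c \<le> pi \<and> b + c \<le> pi
      \<or> pi \<le> b + a \<and> pi \<le> c + a \<or> b + a \<le> pi \<and> c + a \<le> pi
      \<or> pi \<le> a + b \<and> pi \<le> c + b \<or> a + b \<le> pi \<and> c + b \<le> pi"
    by linarith
  then have "sin d * sin a * sin b * sin c \<le> (sin a + sin b + sin c - sin d) ^ 2"
    using pair[of a b c d] pair[of b c a d] pair[of a c b d] assms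
    by (auto simp: ac_simps)
  moreover have "(sin a + sin b + sin c - sin d) ^ 2 = (sin d - sin a - sin b - sin c) ^ 2"
    by (simp add: power2_eq_square algebra_simps)
  moreover have "0 \<le> sin d * sin a * sin b * sin c"
    using assms by (intro mult_nonneg_nonneg sin_ge_zero) auto
  ultimately show ?thesis
    unfolding resonance_ratio_def by (auto simp: divide_le_eq_1)
qed

lemma resonant_quadruple_cases:
  fixes N :: nat and k1 k2 k3 k4 :: int
  assumes k: "k1 \<in> {1..int N - 1}" "k2 \<in> {1..int N - 1}" "k3 \<in> {1..int N - 1}" "k4 \<in> {1..int N - 1}"
    and cong: "[k1 - k2 - k3 - k4 = 0] (mod int N)"
  obtains j where "j \<in> {0, 1, 2}" "k2 + k3 + k4 = k1 + int N * j"
proof -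
  obtain t where t: "k1 - k2 - k3 - k4 = int N * t"
    using cong unfolding cong_0_iff dvd_def by blast
  then have j: "k2 + k3 + k4 = k1 + int N * (- t)"
    by (simp add: algebra_simps)
  then have "int N * (- 1) < int N * (- t)" "int N * (- t) < int N * 3"
    using k unfolding atLeastAtMost_iff by linarith+
  then have "- 1 < - t" "- t < 3"
    by (meson mult_left_less_imp_less of_nat_0_le_iff)+
  then have "- t \<in> {0, 1, 2}"
    by auto
  from this j show ?thesis by (rule that)
qed

lemma lattice_angle_sum:
  fixes N :: nat and k1 k2 k3 k4 j :: int
  assumes "k2 + k3 + k4 = k1 + int N * j" "0 < real N"
  shows "pi * k2 / N + pi * k3 / N + pi * k4 / N = pi * k1 / N + j * pi"
proof -
  have "pi * k2 / N + pi * k3 / N + pi * k4 / N = pi * of_int (k2 + k3 + k4) / N"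
    by (simp add: add_divide_distrib distrib_left)
  also have "\<dots> = pi * (of_int k1 + real N * of_int j) / N"
    using assms by simp
  also have "\<dots> = pi * k1 / N + j * pi"
    using assms by (simp add: field_simps)
  finally show ?thesis .
qed

lemma resonance_ratio_sin_lattice_le:
  fixes N :: nat and k1 k2 k3 k4 :: int
  assumes k: "k1 \<in> {1..int N - 1}" "k2 \<in> {1..int N - 1}" "k3 \<in> {1..int N - 1}" "k4 \<in> {1..int N - 1}"
    and cong: "[k1 - k2 - k3 - k4 = 0] (mod int N)"
  defines "s \<equiv> \<lambda>k::int. \<bar>sin (pi * k / N)\<bar>"
  shows "resonance_ratio (s k1) (s k2) (s k3) (s k4)
           \<le> 1 + (if k2 < k1 \<and> k3 < k1 then 3 ^ 9 * real N ^ 2 / (pi ^ 2 * of_int k1 ^ 2) else 0)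
               + (if k1 < k2 \<and> k1 < k3 then 3 ^ 9 * real N ^ 2 / (pi ^ 2 * (real N - of_int k1) ^ 2)
                  else 0)"
    (is "_ \<le> 1 + ?B1 + ?B2")
proof -
  define x where "x k = pi * k / N" for k :: int
  have N: "0 < real N" using k by simp
  have x: "0 < x k" "x k < pi" if "k \<in> {1..int N - 1}" for k
    using that N unfolding x_def by (auto simp: divide_less_eq)
  have s: "s k = sin (x k)" if "k \<in> {1..int N - 1}" for k
    using x[OF that] unfolding s_def x_def by (simp add: sin_ge_zero)
  obtain j where "j \<in> {0, 1, 2}" and j: "k2 + k3 + k4 = k1 + int N * j"
    using k cong by (rule resonant_quadruple_cases)
  have xj: "x k2 + x k3 + x k4 = x k1 + j * pi"
    using lattice_angle_sum[OF j N] unfolding x_def .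
  consider "j = 0" | "j = 1" | "j = 2"
    using \<open>j \<in> {0, 1, 2}\<close> by blast
  then have "resonance_ratio (s k1) (s k2) (s k3) (s k4) \<le> 1 \<or>
      resonance_ratio (s k1) (s k2) (s k3) (s k4) \<le> ?B1 \<or>
      resonance_ratio (s k1) (s k2) (s k3) (s k4) \<le> ?B2"
  proof cases
    case 1
    then have "resonance_ratio (s k1) (s k2) (s k3) (s k4) \<le> 3 ^ 9 / x k1 ^ 2"
      using resonance_ratio_sin_sum_le[of "x k2" "x k3" "x k4" "x k1"] xj x k by (simp add: s)
    moreover have "3 ^ 9 / x k1 ^ 2 = 3 ^ 9 * real N ^ 2 / (pi ^ 2 * of_int k1 ^ 2)"
      unfolding x_def by (simp add: power_divide power_mult_distrib)
    moreover have "k2 < k1 \<and> k3 < k1" using j k 1 by simp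
    ultimately show ?thesis by simp
  next
    case 2
    then show ?thesis
      using resonance_ratio_sin_sum_pi_le_one[of "x k2" "x k3" "x k4" "x k1"] xj x k
      by (simp add: s less_imp_le)
  next
    case 3
    then have "resonance_ratio (s k1) (s k2) (s k3) (s k4) \<le> 3 ^ 9 / (pi - x k1) ^ 2"
      using resonance_ratio_sin_sum_2pi_le[of "x k2" "x k3" "x k4" "x k1"] xj x k by (simp add: s)
    moreover have "pi - x k1 = pi * (real N - of_int k1) / N"
      unfolding x_def using N by (simp add: field_simps)
    then have "3 ^ 9 / (pi - x k1) ^ 2 = 3 ^ 9 * real N ^ 2 / (pi ^ 2 * (real N - of_int k1) ^ 2)"
      by (simp add: power_divide power_mult_distrib)
    moreover have "k1 < k2 \<and> k1 < k3" using j k 3 by simp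
    ultimately show ?thesis by simp
  qed
  moreover have "0 \<le> ?B1" "0 \<le> ?B2" by simp_all
  ultimately show ?thesis by linarith
qed

lemma A1_sq_le_resonance_ratio:
  fixes \<kappa> m :: real and N :: nat and k1 k2 k3 k4 :: int
  assumes "0 < \<kappa>" "0 < m"
  defines "s \<equiv> \<lambda>k::int. \<bar>sin (pi * k / N)\<bar>"
  shows "(A1 \<kappa> m N k1 k2 k3 k4) ^ 2 \<le> 9 / (4 * \<kappa> ^ 3 * m) * resonance_ratio (s k1) (s k2) (s k3) (s k4)"
proof -
  let ?\<omega> = "omega \<kappa> m N"
  define I where "I = iota N (k2 + k3 + k4) * iota N k2 * iota N k3 * iota N k4"
  have \<omega>: "?\<omega> k = 2 * sqrt (\<kappa> / m) * s k" for k
    unfolding omega_def s_def by simp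
  have \<omega>_nonneg: "0 \<le> ?\<omega> k" for k
    unfolding \<omega> using assms by simp
  have I: "I ^ 2 \<le> 1"
    unfolding abs_square_le_1 I_def iota_def by (simp add: abs_mult sgn_real_def mult_le_one)
  have "(A1 \<kappa> m N k1 k2 k3 k4) ^ 2
      = 9 / (16 * \<kappa> ^ 4) * I ^ 2 * resonance_ratio (?\<omega> k1) (?\<omega> k2) (?\<omega> k3) (?\<omega> k4)"
    unfolding A1_def T4_def resonance_ratio_def I_def
    using \<omega>_nonneg by (simp add: power_divide power_mult_distrib)
  also have "\<dots> \<le> 9 / (16 * \<kappa> ^ 4) * 1 * resonance_ratio (?\<omega> k1) (?\<omega> k2) (?\<omega> k3) (?\<omega> k4)"
    using I \<omega>_nonneg unfolding resonance_ratio_def by (intro mult_right_mono mult_left_mono) auto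
  also have "\<dots> = 9 / (4 * \<kappa> ^ 3 * m) * resonance_ratio (s k1) (s k2) (s k3) (s k4)"
    unfolding \<omega> resonance_ratio_scale using assms by (simp add: power_mult_distrib eval_nat_numeral)
  finally show ?thesis .
qed

definition resonant_triples :: "nat \<Rightarrow> int \<Rightarrow> (int \<times> int \<times> int) set" where
  "resonant_triples N k1 = {(k2, k3, k4). k2 \<in> {1..int N - 1} \<and> k3 \<in> {1..int N - 1}
     \<and> k4 \<in> {1..int N - 1} \<and> [k1 - k2 - k3 - k4 = 0] (mod int N)}"

lemma sum_resonant_triples_le_sum_pairs:
  fixes h :: "int \<times> int \<Rightarrow> real"
  assumes "\<And>p. 0 \<le> h p"
  shows "(\<Sum>(k2, k3, k4) \<in> resonant_triples N k1. h (k2, k3))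
           \<le> (\<Sum>p \<in> {1..int N - 1} \<times> {1..int N - 1}. h p)"
proof -
  let ?pr = "\<lambda>(k2, k3, k4::int). (k2, k3)"
  have "inj_on ?pr (resonant_triples N k1)"
  proof (rule inj_onI)
    fix t t' assume "t \<in> resonant_triples N k1" "t' \<in> resonant_triples N k1" "?pr t = ?pr t'"
    then obtain k2 k3 k4 k4' where t: "t = (k2, k3, k4)" "t' = (k2, k3, k4')"
      and "k4 \<in> {1..int N - 1}" "k4' \<in> {1..int N - 1}"
      and "[k1 - k2 - k3 - k4 = 0] (mod int N)" "[k1 - k2 - k3 - k4' = 0] (mod int N)"
      unfolding resonant_triples_def by auto
    moreover from this have "[k4 = k4'] (mod int N)"
      by (metis cong_diff_iff_cong_0 cong_sym cong_trans)
    ultimately show "t = t'" by (auto intro: cong_less_imp_eq_int)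
  qed
  then have "(\<Sum>(k2, k3, k4) \<in> resonant_triples N k1. h (k2, k3)) = sum h (?pr ` resonant_triples N k1)"
    using sum.reindex[of ?pr _ h] by (simp add: comp_def case_prod_beta)
  also have "\<dots> \<le> (\<Sum>p \<in> {1..int N - 1} \<times> {1..int N - 1}. h p)"
    using assms by (intro sum_mono2) (auto simp: resonant_triples_def)
  finally show ?thesis .
qed

lemma sum_square_if_both:
  fixes c :: real
  assumes "finite A"
  shows "(\<Sum>p \<in> A \<times> A. if P (fst p) \<and> P (snd p) then c else 0) = c * card {x \<in> A. P x} ^ 2"
proof -
  have "(\<Sum>p \<in> A \<times> A. if P (fst p) \<and> P (snd p) then c else 0)
      = (\<Sum>p \<in> {p \<in> A \<times> A. P (fst p) \<and> P (snd p)}. c)"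
    by (rule sum.inter_filter[symmetric]) (simp add: assms)
  also have "{p \<in> A \<times> A. P (fst p) \<and> P (snd p)} = {x \<in> A. P x} \<times> {x \<in> A. P x}"
    by auto
  finally show ?thesis
    by (simp add: card_cartesian_product power2_eq_square)
qed

lemma sum_lattice_weights:
  fixes N :: nat and k1 :: int and B1 B2 :: real
  assumes k1: "k1 \<in> {1..int N - 1}"
  shows "(\<Sum>p \<in> {1..int N - 1} \<times> {1..int N - 1}.
            1 + (if fst p < k1 \<and> snd p < k1 then B1 else 0) + (if k1 < fst p \<and> k1 < snd p then B2 else 0))
         = (real N - 1) ^ 2 + B1 * (of_int k1 - 1) ^ 2 + B2 * (real N - 1 - of_int k1) ^ 2"
proof -
  let ?I = "{1..int N - 1}"
  have "{x \<in> ?I. x < k1} = {1..k1 - 1}" "{x \<in> ?I. k1 < x} = {k1 + 1..int N - 1}"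
    using k1 by auto
  then have "card {x \<in> ?I. x < k1} = k1 - 1" "card {x \<in> ?I. k1 < x} = int N - 1 - k1"
    using k1 by simp_all
  then have "(\<Sum>p \<in> ?I \<times> ?I. if fst p < k1 \<and> snd p < k1 then B1 else 0) = B1 * (of_int k1 - 1) ^ 2"
      "(\<Sum>p \<in> ?I \<times> ?I. if k1 < fst p \<and> k1 < snd p then B2 else 0) = B2 * (real N - 1 - of_int k1) ^ 2"
    using sum_square_if_both[of ?I "\<lambda>x. x < k1" B1] sum_square_if_both[of ?I "\<lambda>x. k1 < x" B2]
    by (simp_all add: of_nat_eq_iff[symmetric])
  moreover have "real (card (?I \<times> ?I)) = (real N - 1) ^ 2"
    using k1 by (simp add: card_cartesian_product power2_eq_square of_nat_diff)
  ultimately show ?thesis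
    by (simp add: sum.distrib)
qed

lemma sum_resonance_ratio_sin_le:
  fixes N :: nat and k1 :: int
  assumes k1: "k1 \<in> {1..int N - 1}"
  defines "s \<equiv> \<lambda>k::int. \<bar>sin (pi * k / N)\<bar>"
  shows "(\<Sum>(k2, k3, k4) \<in> resonant_triples N k1. resonance_ratio (s k1) (s k2) (s k3) (s k4))
           \<le> (1 + 2 * 3 ^ 9 / pi ^ 2) * N ^ 2"
proof -
  define B1 where "B1 = 3 ^ 9 * real N ^ 2 / (pi ^ 2 * of_int k1 ^ 2)"
  define B2 where "B2 = 3 ^ 9 * real N ^ 2 / (pi ^ 2 * (real N - of_int k1) ^ 2)"
  let ?h = "\<lambda>p. 1 + (if fst p < k1 \<and> snd p < k1 then B1 else 0)
    + (if k1 < fst p \<and> k1 < snd p then B2 else 0)"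
  have "(\<Sum>(k2, k3, k4) \<in> resonant_triples N k1. resonance_ratio (s k1) (s k2) (s k3) (s k4))
      \<le> (\<Sum>(k2, k3, k4) \<in> resonant_triples N k1. ?h (k2, k3))"
    using k1 unfolding s_def B1_def B2_def
    by (intro sum_mono) (auto simp: resonant_triples_def intro!: resonance_ratio_sin_lattice_le)
  also have "\<dots> \<le> (\<Sum>p \<in> {1..int N - 1} \<times> {1..int N - 1}. ?h p)"
    unfolding B1_def B2_def by (rule sum_resonant_triples_le_sum_pairs) simp
  also have "\<dots> = (real N - 1) ^ 2 + B1 * (of_int k1 - 1) ^ 2 + B2 * (real N - 1 - of_int k1) ^ 2"
    using k1 by (rule sum_lattice_weights)
  also have "\<dots> \<le> real N ^ 2 + B1 * of_int k1 ^ 2 + B2 * (real N - of_int k1) ^ 2"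
    using k1 unfolding B1_def B2_def by (intro add_mono mult_left_mono power_mono) auto
  also have "\<dots> = (1 + 2 * 3 ^ 9 / pi ^ 2) * N ^ 2"
    using k1 unfolding B1_def B2_def by (simp add: field_simps)
  finally show ?thesis .
qed

lemma sum_A1_sq_le:
  fixes \<kappa> m :: real and N :: nat and k1 :: int
  assumes "0 < \<kappa>" "0 < m" and k1: "k1 \<in> {1..int N - 1}"
  shows "(\<Sum>(k2, k3, k4) \<in> resonant_triples N k1. (A1 \<kappa> m N k1 k2 k3 k4) ^ 2)
           \<le> 9 / (4 * \<kappa> ^ 3 * m) * (1 + 2 * 3 ^ 9 / pi ^ 2) * N ^ 2"
proof -
  define K where "K = 9 / (4 * \<kappa> ^ 3 * m)"
  define s where "s k = \<bar>sin (pi * of_int k / real N)\<bar>" for k :: int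
  have "(\<Sum>(k2, k3, k4) \<in> resonant_triples N k1. (A1 \<kappa> m N k1 k2 k3 k4) ^ 2)
      \<le> (\<Sum>(k2, k3, k4) \<in> resonant_triples N k1. K * resonance_ratio (s k1) (s k2) (s k3) (s k4))"
    using A1_sq_le_resonance_ratio[OF assms(1,2)] unfolding K_def s_def
    by (intro sum_mono) (simp add: case_prod_beta)
  also have "\<dots> = K * (\<Sum>(k2, k3, k4) \<in> resonant_triples N k1.
                        resonance_ratio (s k1) (s k2) (s k3) (s k4))"
    by (simp add: sum_distrib_left case_prod_beta)
  also have "\<dots> \<le> K * ((1 + 2 * 3 ^ 9 / pi ^ 2) * N ^ 2)"
    using sum_resonance_ratio_sin_le[OF k1] assms unfolding K_def s_def
    by (intro mult_left_mono) simp_all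
  finally show ?thesis unfolding K_def by (simp only: mult.assoc)
qed

theorem mainTheorem2:
  fixes \<kappa> m :: real
  assumes "\<kappa> > 0" and "m > 0"
  shows "\<exists>C > 0. \<forall>N::nat. N \<ge> 2 \<longrightarrow> (\<forall>k1::int. 0 < k1 \<and> k1 < int N \<longrightarrow>
    (\<Sum>(k2, k3, k4) \<in> {(k2, k3, k4). k2 \<in> {1..int N - 1} \<and> k3 \<in> {1..int N - 1}
          \<and> k4 \<in> {1..int N - 1} \<and> [k1 - k2 - k3 - k4 = 0] (mod int N)}.
        (A1 \<kappa> m N k1 k2 k3 k4)^2) \<le> C * (real N)^2)"
proof -
  define C where "C = 9 / (4 * \<kappa> ^ 3 * m) * (1 + 2 * 3 ^ 9 / pi ^ 2)"
  have "0 < C"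
    unfolding C_def using assms by (simp add: add_pos_nonneg)
  with sum_A1_sq_le[OF assms, folded C_def] show ?thesis
    unfolding resonant_triples_def by (intro exI[of _ C]) auto
qed

end
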